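(* Fix an integer $r\ge1$. Then: (1) as $\eta\to0^+$, \[ \xi_r^\ast(\eta)=2\log\left(4^r\eta\sqrt{\Psi^r(0)\prod_{k=1}^{r}\Psi^k(0)}\right)+O(\eta); \] (2) as $\eta\to0^+$, \[ \xi_r^\ast\left(\frac{1}{2^r}-\eta\right)=-2^r\log\left(2^{\,r-1+2^{1-r}}\eta\right)+O(\eta). \]
   Context: $\varphi(\xi)=\frac{\xi}{4}+\log\cosh\frac{\xi}{4}$ for $\xi\in\mathbb{R}$, and $\varphi^r$ is its $r$-fold composition; $\varphi^r$ is strictly increasing and strictly convex on $\mathbb{R}$, and its derivative $(\varphi^r)'$ is a strictly increasing bijection from $\mathbb{R}$ onto $(0,2^{-r})$. For $y\in(0,2^{-r})$, $\xi_r^\ast(y)$ denotes the unique real number with $(\varphi^r)'(\xi_r^\ast(y))=y$. For $X\in[0,\infty)$, $\Psi(X)=\frac{\sqrt{X}+1}{2}$, and $\Psi^k$ denotes the $k$-fold composition of $\Psi$. *)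

theory Defs
  imports "HOL-Analysis.Analysis" "HOL-Library.Landau_Symbols"
begin

definition phi :: "real \<Rightarrow> real" where
  "phi \<xi> = \<xi> / 4 + ln (cosh (\<xi> / 4))"

definition phi_iter :: "nat \<Rightarrow> real \<Rightarrow> real" where
  "phi_iter r = phi ^^ r"

text \<open>xi_star r y: the unique real with (phi^r)'(xi) = y, for y in (0, 2^-r)\<close>
definition xi_star :: "nat \<Rightarrow> real \<Rightarrow> real" where
  "xi_star r y = (THE \<xi>. deriv (phi_iter r) \<xi> = y)"

definition Psi :: "real \<Rightarrow> real" where
  "Psi X = (sqrt X + 1) / 2"

end

theory Submission
  imports Defs
begin

text \<open>
  The substitution \<open>X = exp \<xi>\<close> conjugates \<open>phi\<close> to \<open>Psi\<close>: \<open>exp (phi \<xi>) = Psi (exp \<xi>)\<close>.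
  By the chain rule \<open>(phi^r)' \<xi> = F\<^sub>r (exp \<xi>)\<close> with \<open>F\<^sub>r X = \<Prod>k<r. h (Psi^k X)\<close> and
  \<open>h Y = sqrt Y / (4 * Psi Y)\<close> (\<open>phi_iter_slope\<close> and \<open>phi_slope\<close> below). Since \<open>F\<^sub>r\<close> increases strictly from \<open>F\<^sub>r 0 = 0\<close> towards
  \<open>2^-r\<close>, we get \<open>xi_star r (F\<^sub>r X) = ln X\<close>, and both claims become estimates of
  \<open>ln X\<close> in terms of \<open>F\<^sub>r X\<close>.

  Near \<open>0\<close> the product telescopes: \<open>sqrt X = 4^r * F\<^sub>r X * G\<^sub>r X\<close> where
  \<open>G\<^sub>r X\<^sup>2 = Psi^r X * (\<Prod>k=1..r. Psi^k X)\<close> (\<open>Psi_weight\<close>), and \<open>ln (G\<^sub>r X)\<close> differs from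
  \<open>ln (G\<^sub>r 0)\<close> by \<open>O(sqrt X) = O(F\<^sub>r X)\<close>.

  Near \<open>2^-r\<close> the point \<open>X\<close> is large and the orbit \<open>Psi^k X \<ge> 1\<close> collapses doubly
  exponentially: \<open>sqrt (Psi^k X) \<ge> Psi^(r-1) X = s\<^sup>2\<close> for \<open>k < r - 1\<close>. Hence all factors of
  \<open>2^r * F\<^sub>r X\<close> but the last are \<open>1 - O(1/s\<^sup>2)\<close>, which gives
  \<open>s * 2^r * \<eta> = 1 + O(1/s)\<close> for \<open>\<eta> = 2^-r - F\<^sub>r X\<close>. Unwinding
  \<open>ln (Psi Y) = ln Y / 2 - ln 2 + O(1/sqrt Y)\<close> along the orbit expresses \<open>ln X\<close> through
  \<open>ln s\<close> up to \<open>O(2^r/s)\<close>, and eliminating \<open>s\<close> gives the second claim with error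
  \<open>O(1/s) = O(\<eta>)\<close>.
\<close>

section \<open>Conjugating phi to Psi\<close>

definition phi_slope :: "real \<Rightarrow> real" where
  "phi_slope Y = sqrt Y / (4 * Psi Y)"

definition phi_iter_slope :: "nat \<Rightarrow> real \<Rightarrow> real" where
  "phi_iter_slope r X = (\<Prod>k<r. phi_slope ((Psi ^^ k) X))"

lemma Psi_ge_half: "0 \<le> X \<Longrightarrow> 1/2 \<le> Psi X"
  by (simp add: Psi_def)

lemma Psi_mono: "0 \<le> a \<Longrightarrow> a \<le> b \<Longrightarrow> Psi a \<le> Psi b"
  by (simp add: Psi_def)

lemma Psi_iter_nonneg: "0 \<le> X \<Longrightarrow> 0 \<le> (Psi ^^ k) X"
  by (induction k) (auto simp: Psi_def)

lemma Psi_iter_pos: "0 < X \<Longrightarrow> 0 < (Psi ^^ k) X"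
  by (induction k) (auto simp: Psi_def add_pos_nonneg)

lemma Psi_iter_ge_half: "0 \<le> X \<Longrightarrow> 1 \<le> k \<Longrightarrow> 1/2 \<le> (Psi ^^ k) X"
  using Psi_ge_half[OF Psi_iter_nonneg] by (cases k) auto

lemma Psi_iter_ge_1: "1 \<le> X \<Longrightarrow> 1 \<le> (Psi ^^ k) X"
  by (induction k) (auto simp: Psi_def)

lemma Psi_iter_le_1: "0 \<le> X \<Longrightarrow> X \<le> 1 \<Longrightarrow> (Psi ^^ k) X \<le> 1"
  by (induction k) (auto simp: Psi_def Psi_iter_nonneg)

lemma Psi_iter_mono: "0 \<le> a \<Longrightarrow> a \<le> b \<Longrightarrow> (Psi ^^ k) a \<le> (Psi ^^ k) b"
  by (induction k) (auto intro: Psi_mono Psi_iter_nonneg)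

lemma continuous_on_Psi_iter: "continuous_on UNIV (Psi ^^ k)"
proof (induction k)
  case (Suc k)
  have "continuous_on UNIV Psi"
    unfolding Psi_def by (intro continuous_intros) auto
  with Suc show ?case
    by (simp add: continuous_on_compose2[of UNIV Psi])
qed (simp add: id_def)

lemma filterlim_Psi_iter_at_top: "filterlim (Psi ^^ k) at_top at_top"
proof (induction k)
  case (Suc k)
  have "filterlim (\<lambda>X. 1/2 * (1 + sqrt X)) at_top at_top"
    by (intro filterlim_tendsto_pos_mult_at_top[OF tendsto_const]
        filterlim_tendsto_add_at_top[OF tendsto_const sqrt_at_top]) simp
  then have "filterlim Psi at_top at_top"
    by (simp add: Psi_def[abs_def] add.commute)
  with Suc show ?case
    unfolding funpow_Suc_right comp_def by (rule filterlim_compose)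
qed (simp add: filterlim_ident)

lemma sqrt_exp: "sqrt (exp x) = exp (x/2)"
  by (rule real_sqrt_unique) (simp_all add: power2_eq_square flip: exp_add)

lemma exp_phi: "exp (phi \<xi>) = Psi (exp \<xi>)"
proof -
  have "exp (phi \<xi>) = exp (\<xi>/4) * cosh (\<xi>/4)"
    by (simp add: phi_def exp_add)
  also have "\<dots> = (exp (\<xi>/4) * exp (\<xi>/4) + exp (\<xi>/4) * exp (-(\<xi>/4))) / 2"
    by (simp add: cosh_def algebra_simps)
  also have "\<dots> = (sqrt (exp \<xi>) + 1) / 2"
    by (simp add: sqrt_exp flip: exp_add)
  finally show ?thesis
    by (simp add: Psi_def)
qed

lemma exp_phi_iter: "exp ((phi ^^ k) \<xi>) = (Psi ^^ k) (exp \<xi>)"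
  by (induction k) (simp_all add: exp_phi)

lemma phi_eq_ln_Psi_exp: "phi \<xi> = ln (Psi (exp \<xi>))"
  by (metis exp_phi ln_exp)

lemma two_phi_slope: "0 \<le> Y \<Longrightarrow> 2 * phi_slope Y = 1 - 1 / (1 + sqrt Y)"
proof -
  assume "0 \<le> Y"
  then have "0 < 1 + sqrt Y"
    by (simp add: add_pos_nonneg)
  then show ?thesis
    by (simp add: phi_slope_def Psi_def field_simps)
qed

lemma phi_slope_nonneg: "0 \<le> Y \<Longrightarrow> 0 \<le> phi_slope Y"
  by (simp add: phi_slope_def Psi_def)

lemma phi_slope_pos: "0 < Y \<Longrightarrow> 0 < phi_slope Y"
  by (simp add: phi_slope_def Psi_def add_pos_nonneg)

lemma phi_slope_strict_mono:
  assumes "0 \<le> a" "a < b"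
  shows "phi_slope a < phi_slope b"
proof -
  have "1 / (1 + sqrt b) < 1 / (1 + sqrt a)"
    using assms by (intro frac_less2) (auto simp: add_pos_nonneg)
  with assms show ?thesis
    using two_phi_slope[of a] two_phi_slope[of b] by simp
qed

lemma phi_slope_mono: "0 \<le> a \<Longrightarrow> a \<le> b \<Longrightarrow> phi_slope a \<le> phi_slope b"
  using phi_slope_strict_mono[of a b] by (cases "a = b") auto

lemma phi_has_derivative: "(phi has_real_derivative phi_slope (exp \<xi>)) (at \<xi>)"
proof -
  have "((\<lambda>\<xi>. ln (Psi (exp \<xi>))) has_real_derivative
          inverse (Psi (exp \<xi>)) * (inverse (sqrt (exp \<xi>)) / 4 * exp \<xi>)) (at \<xi>)"
    unfolding Psi_def by (auto intro!: derivative_eq_intros add_pos_nonneg)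
  moreover have "inverse (Psi (exp \<xi>)) * (inverse (sqrt (exp \<xi>)) / 4 * exp \<xi>)
      = exp \<xi> / sqrt (exp \<xi>) / (4 * Psi (exp \<xi>))"
    by (simp add: field_simps)
  ultimately show ?thesis
    by (simp add: phi_eq_ln_Psi_exp[abs_def] real_div_sqrt phi_slope_def mult.commute)
qed

lemma phi_iter_slope_Suc: "phi_iter_slope (Suc r) X = phi_iter_slope r X * phi_slope ((Psi ^^ r) X)"
  by (simp add: phi_iter_slope_def)

lemma phi_iter_slope_Suc_shift: "phi_iter_slope (Suc r) X = phi_slope X * phi_iter_slope r (Psi X)"
  unfolding phi_iter_slope_def prod.lessThan_Suc_shift
  by (simp add: funpow_Suc_right del: funpow.simps)

lemma phi_iter_has_derivative:
  "((phi ^^ r) has_real_derivative phi_iter_slope r (exp \<xi>)) (at \<xi>)"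
proof (induction r)
  case (Suc r)
  have "(phi \<circ> phi ^^ r has_real_derivative phi_slope (exp ((phi ^^ r) \<xi>)) * phi_iter_slope r (exp \<xi>)) (at \<xi>)"
    by (rule DERIV_chain[OF phi_has_derivative Suc])
  then show ?case
    by (simp add: exp_phi_iter phi_iter_slope_Suc mult.commute comp_def)
qed (simp add: phi_iter_slope_def)

lemma deriv_phi_iter: "deriv (phi_iter r) \<xi> = phi_iter_slope r (exp \<xi>)"
  unfolding phi_iter_def by (rule DERIV_imp_deriv[OF phi_iter_has_derivative])

lemma phi_iter_slope_pos: "0 < X \<Longrightarrow> 0 < phi_iter_slope r X"
  by (simp add: phi_iter_slope_def prod_pos phi_slope_pos Psi_iter_pos)

lemma phi_iter_slope_zero: "1 \<le> r \<Longrightarrow> phi_iter_slope r 0 = 0"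
  by (cases r) (simp_all add: phi_iter_slope_Suc_shift phi_slope_def)

lemma phi_iter_slope_mono: "0 \<le> a \<Longrightarrow> a \<le> b \<Longrightarrow> phi_iter_slope r a \<le> phi_iter_slope r b"
  unfolding phi_iter_slope_def
  by (intro prod_mono) (auto intro: phi_slope_nonneg phi_slope_mono Psi_iter_nonneg Psi_iter_mono)

lemma phi_iter_slope_strict_mono:
  assumes "1 \<le> r" "0 \<le> a" "a < b"
  shows "phi_iter_slope r a < phi_iter_slope r b"
proof -
  obtain m where r: "r = Suc m"
    using assms(1) by (cases r) auto
  have "0 < phi_iter_slope m (Psi a)"
    using Psi_ge_half[OF assms(2)] by (intro phi_iter_slope_pos) simp
  then have "phi_slope a * phi_iter_slope m (Psi a) < phi_slope b * phi_iter_slope m (Psi a)"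
    using phi_slope_strict_mono[OF assms(2,3)] by simp
  also have "\<dots> \<le> phi_slope b * phi_iter_slope m (Psi b)"
    using assms by (intro mult_left_mono phi_iter_slope_mono Psi_mono phi_slope_nonneg)
      (auto simp: Psi_def)
  finally show ?thesis
    by (simp add: r phi_iter_slope_Suc_shift)
qed

lemma xi_star_phi_iter_slope:
  assumes "1 \<le> r" "0 < X"
  shows "xi_star r (phi_iter_slope r X) = ln X"
  unfolding xi_star_def deriv_phi_iter
proof (rule the_equality)
  fix \<xi> assume eq: "phi_iter_slope r (exp \<xi>) = phi_iter_slope r X"
  have "exp \<xi> = X"
    using phi_iter_slope_strict_mono[OF assms(1), of "exp \<xi>" X]
      phi_iter_slope_strict_mono[OF assms(1), of X "exp \<xi>"] eq assms(2)
    by (cases "exp \<xi>" X rule: linorder_cases) auto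
  then show "\<xi> = ln X"
    by auto
qed (use assms in simp)

lemma continuous_on_phi_iter_slope: "continuous_on {0..} (phi_iter_slope r)"
proof -
  have "Psi ((Psi ^^ k) X) \<noteq> 0" if "0 \<le> X" for k X
    using Psi_ge_half[OF Psi_iter_nonneg[OF that, of k]] by linarith
  then have "continuous_on {0..} (\<lambda>X. sqrt ((Psi ^^ k) X) / (4 * Psi ((Psi ^^ k) X)))" for k
    using continuous_on_Psi_iter[of k] continuous_on_Psi_iter[of "Suc k"]
    by (intro continuous_intros) (auto intro: continuous_on_subset)
  then show ?thesis
    unfolding phi_iter_slope_def phi_slope_def by (intro continuous_on_prod) auto
qed

section \<open>The regime \<open>\<eta> \<rightarrow> 0\<close>\<close>

definition Psi_weight :: "nat \<Rightarrow> real \<Rightarrow> real" where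
  "Psi_weight r X = sqrt ((Psi ^^ r) X * (\<Prod>k\<in>{1..r}. (Psi ^^ k) X))"

lemma sqrt_eq_phi_iter_slope_mult_Psi_weight:
  "0 \<le> X \<Longrightarrow> sqrt X = 4 ^ r * phi_iter_slope r X * Psi_weight r X"
proof (induction r)
  case (Suc r)
  define Y where "Y = (Psi ^^ r) X"
  define P where "P = (\<Prod>k\<in>{1..r}. (Psi ^^ k) X)"
  have "0 < Psi Y"
    using Psi_ge_half[OF Psi_iter_nonneg[OF Suc.prems, of r]] unfolding Y_def by linarith
  moreover have "Psi_weight (Suc r) X = sqrt (Psi Y * Psi Y) * sqrt P"
    by (simp add: Psi_weight_def Y_def P_def prod.cl_ivl_Suc real_sqrt_mult ac_simps)
  moreover have "Psi_weight r X = sqrt Y * sqrt P"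
    by (simp add: Psi_weight_def Y_def P_def real_sqrt_mult)
  ultimately show ?case
    using Suc by (simp add: phi_iter_slope_Suc phi_slope_def Y_def)
qed (simp add: phi_iter_slope_def Psi_weight_def)

lemma Psi_weight_pos: "0 \<le> X \<Longrightarrow> 1 \<le> r \<Longrightarrow> 0 < Psi_weight r X"
  using Psi_iter_ge_half[of X]
  by (fastforce simp: Psi_weight_def intro!: mult_pos_pos prod_pos)

lemma Psi_weight_le_1: "0 \<le> X \<Longrightarrow> X \<le> 1 \<Longrightarrow> Psi_weight r X \<le> 1"
  unfolding Psi_weight_def
  by (auto intro!: mult_le_one prod_le_1 prod_nonneg Psi_iter_nonneg Psi_iter_le_1)

lemma two_ln_Psi_weight:
  assumes "0 \<le> X" "1 \<le> r"
  shows "2 * ln (Psi_weight r X) = ln ((Psi ^^ r) X) + (\<Sum>k\<in>{1..r}. ln ((Psi ^^ k) X))"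
proof -
  have pos: "0 < (Psi ^^ k) X" if "1 \<le> k" for k
    using Psi_iter_ge_half[OF assms(1) that] by simp
  then have "0 < (\<Prod>k\<in>{1..r}. (Psi ^^ k) X)"
    by (intro prod_pos) auto
  moreover have "ln (\<Prod>k\<in>{1..r}. (Psi ^^ k) X) = (\<Sum>k\<in>{1..r}. ln ((Psi ^^ k) X))"
    using pos by (intro ln_prod) force+
  ultimately show ?thesis
    using pos[OF assms(2)] by (simp add: Psi_weight_def ln_sqrt ln_mult_pos)
qed

lemma sqrt_diff_le_diff: "1/4 \<le> b \<Longrightarrow> b \<le> a \<Longrightarrow> sqrt a - sqrt b \<le> a - b"
proof -
  assume b: "1/4 \<le> b" and ab: "b \<le> a"
  have "1/2 \<le> sqrt b"
    using b by (intro real_le_rsqrt) (simp add: power2_eq_square)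
  moreover have "sqrt b \<le> sqrt a"
    using ab by simp
  ultimately have "(sqrt a - sqrt b) * 1 \<le> (sqrt a - sqrt b) * (sqrt a + sqrt b)"
    by (intro mult_left_mono) linarith+
  also have "\<dots> = a - b"
    using b ab by (simp add: algebra_simps)
  finally show ?thesis
    by simp
qed

lemma ln_diff_le_div: "0 < (a::real) \<Longrightarrow> 0 < b \<Longrightarrow> ln a - ln b \<le> (a - b) / b"
  using ln_le_minus_one[of "a / b"] by (simp add: ln_div diff_divide_distrib)

lemma Psi_iter_diff_le:
  assumes "0 \<le> X" "1 \<le> k"
  shows "(Psi ^^ k) X - (Psi ^^ k) 0 \<le> sqrt X / 2"
  using assms(2)
proof (induction k rule: dec_induct)
  case base
  then show ?case
    by (simp add: Psi_def field_simps)
next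
  case (step k)
  have "1/2 \<le> (Psi ^^ k) 0" "(Psi ^^ k) 0 \<le> (Psi ^^ k) X"
    using Psi_iter_ge_half[of 0 k] Psi_iter_mono[of 0 X k] step(1) assms(1) by auto
  then have "sqrt ((Psi ^^ k) X) - sqrt ((Psi ^^ k) 0) \<le> (Psi ^^ k) X - (Psi ^^ k) 0"
    by (intro sqrt_diff_le_diff) auto
  with step.IH real_sqrt_ge_zero[OF assms(1)] show ?case
    unfolding funpow.simps comp_apply Psi_def[of "(Psi ^^ k) X"] Psi_def[of "(Psi ^^ k) 0"]
    by argo
qed

lemma ln_Psi_iter_diff_bounds:
  assumes "0 \<le> X" "1 \<le> k"
  shows "0 \<le> ln ((Psi ^^ k) X) - ln ((Psi ^^ k) 0)"
    and "ln ((Psi ^^ k) X) - ln ((Psi ^^ k) 0) \<le> sqrt X"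
proof -
  have b: "1/2 \<le> (Psi ^^ k) 0" and ab: "(Psi ^^ k) 0 \<le> (Psi ^^ k) X"
    using Psi_iter_ge_half[of 0 k] Psi_iter_mono[of 0 X k] assms by auto
  then show "0 \<le> ln ((Psi ^^ k) X) - ln ((Psi ^^ k) 0)"
    by simp
  have "ln ((Psi ^^ k) X) - ln ((Psi ^^ k) 0) \<le> ((Psi ^^ k) X - (Psi ^^ k) 0) / (Psi ^^ k) 0"
    using b ab by (intro ln_diff_le_div) auto
  also have "\<dots> \<le> ((Psi ^^ k) X - (Psi ^^ k) 0) / (1/2)"
    using b ab by (intro divide_left_mono) auto
  also have "\<dots> \<le> sqrt X"
    using Psi_iter_diff_le[OF assms] by simp
  finally show "ln ((Psi ^^ k) X) - ln ((Psi ^^ k) 0) \<le> sqrt X" .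
qed

lemma ln_Psi_weight_diff_le:
  assumes "0 \<le> X" "1 \<le> r"
  shows "\<bar>2 * ln (Psi_weight r X) - 2 * ln (Psi_weight r 0)\<bar> \<le> (real r + 1) * sqrt X"
proof -
  define D where "D k = ln ((Psi ^^ k) X) - ln ((Psi ^^ k) 0)" for k
  have D: "0 \<le> D k" "D k \<le> sqrt X" if "1 \<le> k" for k
    unfolding D_def using ln_Psi_iter_diff_bounds[OF assms(1) that] by auto
  have "2 * ln (Psi_weight r X) - 2 * ln (Psi_weight r 0) = D r + (\<Sum>k\<in>{1..r}. D k)"
    using assms by (simp add: two_ln_Psi_weight D_def sum_subtractf)
  moreover have "0 \<le> (\<Sum>k\<in>{1..r}. D k)" "(\<Sum>k\<in>{1..r}. D k) \<le> r * sqrt X"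
    using D sum_bounded_above[of "{1..r}" D "sqrt X"] by (auto intro: sum_nonneg)
  ultimately show ?thesis
    using D[OF assms(2)] by (simp add: algebra_simps)
qed

lemma ln_approx_by_phi_iter_slope_at_0:
  assumes "1 \<le> r" "0 < X" "X \<le> 1"
  shows "\<bar>ln X - 2 * ln (4 ^ r * phi_iter_slope r X * Psi_weight r 0)\<bar>
           \<le> (real r + 1) * 4 ^ r * phi_iter_slope r X"
proof -
  define \<eta> where "\<eta> = phi_iter_slope r X"
  have \<eta>: "0 < \<eta>"
    unfolding \<eta>_def using assms(2) by (rule phi_iter_slope_pos)
  have G: "0 < Psi_weight r X" "Psi_weight r X \<le> 1" "0 < Psi_weight r 0"
    using assms by (auto intro: Psi_weight_pos Psi_weight_le_1)
  have sqrt_X: "sqrt X = 4 ^ r * \<eta> * Psi_weight r X"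
    unfolding \<eta>_def using assms(2) by (simp add: sqrt_eq_phi_iter_slope_mult_Psi_weight)
  have "ln X = 2 * ln (sqrt X)"
    using assms(2) by (simp add: ln_sqrt)
  then have "ln X - 2 * ln (4 ^ r * \<eta> * Psi_weight r 0)
      = 2 * ln (Psi_weight r X) - 2 * ln (Psi_weight r 0)"
    unfolding sqrt_X using \<eta> G by (simp add: ln_mult_pos algebra_simps)
  also have "\<bar>\<dots>\<bar> \<le> (real r + 1) * sqrt X"
    using ln_Psi_weight_diff_le[of X r] assms by simp
  also have "\<dots> \<le> (real r + 1) * 4 ^ r * \<eta>"
    unfolding sqrt_X using G \<eta> by (simp add: mult_left_le)
  finally show ?thesis
    unfolding \<eta>_def .
qed

lemma xi_star_asymptotics_at_0:
  assumes "1 \<le> r"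
  shows "(\<lambda>\<eta>. xi_star r \<eta> - 2 * ln (4 ^ r * \<eta> * Psi_weight r 0)) \<in> O[at_right 0](\<lambda>\<eta>. \<eta>)"
proof (rule bigoI)
  show "\<forall>\<^sub>F \<eta> in at_right 0.
      norm (xi_star r \<eta> - 2 * ln (4 ^ r * \<eta> * Psi_weight r 0)) \<le> ((real r + 1) * 4 ^ r) * norm \<eta>"
    using eventually_at_right_real[OF phi_iter_slope_pos[OF zero_less_one]]
  proof (rule eventually_mono)
    fix \<eta> :: real
    assume "\<eta> \<in> {0<..<phi_iter_slope r 1}"
    then have \<eta>: "0 < \<eta>" "\<eta> < phi_iter_slope r 1"
      by auto
    have "continuous_on {0..1} (phi_iter_slope r)"
      by (rule continuous_on_subset[OF continuous_on_phi_iter_slope]) auto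
    then obtain X where X: "0 \<le> X" "X \<le> 1" "phi_iter_slope r X = \<eta>"
      using IVT'[of "phi_iter_slope r" 0 \<eta> 1] phi_iter_slope_zero[OF assms] \<eta> by auto
    with \<eta> have "0 < X"
      using phi_iter_slope_zero[OF assms] by (cases "X = 0") auto
    with X assms show "norm (xi_star r \<eta> - 2 * ln (4 ^ r * \<eta> * Psi_weight r 0))
        \<le> ((real r + 1) * 4 ^ r) * norm \<eta>"
      using ln_approx_by_phi_iter_slope_at_0[of r X] xi_star_phi_iter_slope[of r X] \<eta> by simp
  qed
qed

section \<open>The regime \<open>\<eta> \<rightarrow> 2^-r\<close>\<close>

lemma Psi_le_sqrt: "1 \<le> Y \<Longrightarrow> Psi Y \<le> sqrt Y"
  using real_sqrt_ge_one[of Y] by (simp add: Psi_def)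

lemma Psi_le_self: "1 \<le> Y \<Longrightarrow> Psi Y \<le> Y"
proof -
  assume "1 \<le> Y"
  then have "sqrt Y * 1 \<le> sqrt Y * sqrt Y"
    by (intro mult_left_mono real_sqrt_ge_one) auto
  with \<open>1 \<le> Y\<close> show ?thesis
    using Psi_le_sqrt[of Y] by simp
qed

lemma Psi_iter_antimono: "1 \<le> X \<Longrightarrow> j \<le> k \<Longrightarrow> (Psi ^^ k) X \<le> (Psi ^^ j) X"
  by (rule lift_Suc_antimono_le[of "\<lambda>k. (Psi ^^ k) X"]) (simp_all add: Psi_le_self Psi_iter_ge_1)

lemma Psi_iter_le_sqrt_Psi_iter: "1 \<le> X \<Longrightarrow> k < m \<Longrightarrow> (Psi ^^ m) X \<le> sqrt ((Psi ^^ k) X)"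
  using Psi_iter_antimono[of X "Suc k" m] Psi_le_sqrt[OF Psi_iter_ge_1[of X k]] by simp

lemma ln_Psi:
  assumes "0 < Y"
  shows "2 * ln (Psi Y) = ln Y + 2 * ln (1 + 1 / sqrt Y) - 2 * ln 2"
proof -
  have pos: "0 < sqrt Y" "0 < 1 + 1 / sqrt Y"
    using assms by (auto simp: add_pos_pos)
  have Psi_Y: "Psi Y = sqrt Y * (1 + 1 / sqrt Y) / 2"
    using assms by (simp add: Psi_def field_simps)
  have "ln (Psi Y) = ln (sqrt Y) + ln (1 + 1 / sqrt Y) - ln 2"
    unfolding Psi_Y using pos by (simp add: ln_div ln_mult_pos)
  with assms show ?thesis
    by (simp add: ln_sqrt)
qed

lemma ln_Psi_iter:
  assumes "0 < X"
  shows "2 ^ n * ln ((Psi ^^ n) X)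
    = ln X - (2 ^ (n + 1) - 2) * ln 2 + (\<Sum>k<n. 2 ^ (k + 1) * ln (1 + 1 / sqrt ((Psi ^^ k) X)))"
proof (induction n)
  case (Suc n)
  define Y where "Y = (Psi ^^ n) X"
  have "2 ^ Suc n * ln ((Psi ^^ Suc n) X) = 2 ^ n * (2 * ln (Psi Y))"
    by (simp add: Y_def)
  also have "\<dots> = 2 ^ n * (ln Y + 2 * ln (1 + 1 / sqrt Y) - 2 * ln 2)"
    using ln_Psi[OF Psi_iter_pos[OF assms, of n]] by (simp only: Y_def)
  also have "\<dots> = 2 ^ n * ln Y + 2 ^ (n + 1) * ln (1 + 1 / sqrt Y) - 2 ^ (n + 1) * ln 2"
    by (simp add: algebra_simps)
  finally show ?case
    using Suc by (simp add: Y_def algebra_simps)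
qed simp

lemma ln_Psi_iter_remainder_bounds:
  assumes "1 \<le> X"
  shows "0 \<le> (\<Sum>k<m. 2 ^ (k + 1) * ln (1 + 1 / sqrt ((Psi ^^ k) X)))"
    and "(\<Sum>k<m. 2 ^ (k + 1) * ln (1 + 1 / sqrt ((Psi ^^ k) X))) \<le> real m * 2 ^ m / (Psi ^^ m) X"
proof -
  have term_bounds: "0 \<le> 2 ^ (k + 1) * ln (1 + 1 / sqrt ((Psi ^^ k) X))"
      "2 ^ (k + 1) * ln (1 + 1 / sqrt ((Psi ^^ k) X)) \<le> 2 ^ m / (Psi ^^ m) X"
    if "k < m" for k
  proof -
    have m: "1 \<le> (Psi ^^ m) X" "(Psi ^^ m) X \<le> sqrt ((Psi ^^ k) X)"
      using assms that by (auto intro: Psi_iter_ge_1 Psi_iter_le_sqrt_Psi_iter)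
    have "ln (1 + 1 / sqrt ((Psi ^^ k) X)) \<le> 1 / sqrt ((Psi ^^ k) X)"
      using Psi_iter_ge_1[OF assms, of k] by (intro ln_add_one_self_le_self) simp
    also have "\<dots> \<le> 1 / (Psi ^^ m) X"
      using m Psi_iter_ge_1[OF assms, of k] by (intro divide_left_mono) (auto intro!: mult_pos_pos)
    finally have "ln (1 + 1 / sqrt ((Psi ^^ k) X)) \<le> 1 / (Psi ^^ m) X" .
    moreover have "(2::real) ^ (k + 1) \<le> 2 ^ m"
      using that by (intro power_increasing) auto
    ultimately have "2 ^ (k + 1) * ln (1 + 1 / sqrt ((Psi ^^ k) X)) \<le> 2 ^ m * (1 / (Psi ^^ m) X)"
      using Psi_iter_ge_1[OF assms, of k] by (intro mult_mono) auto
    then show "2 ^ (k + 1) * ln (1 + 1 / sqrt ((Psi ^^ k) X)) \<le> 2 ^ m / (Psi ^^ m) X"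
      by simp
    show "0 \<le> 2 ^ (k + 1) * ln (1 + 1 / sqrt ((Psi ^^ k) X))"
      using Psi_iter_ge_1[OF assms, of k] by simp
  qed
  then show "0 \<le> (\<Sum>k<m. 2 ^ (k + 1) * ln (1 + 1 / sqrt ((Psi ^^ k) X)))"
    by (intro sum_nonneg) auto
  show "(\<Sum>k<m. 2 ^ (k + 1) * ln (1 + 1 / sqrt ((Psi ^^ k) X))) \<le> real m * 2 ^ m / (Psi ^^ m) X"
    using sum_bounded_above[of "{..<m}" _ "2 ^ m / (Psi ^^ m) X"] term_bounds by simp
qed

lemma one_minus_sum_le_prod_one_minus:
  fixes a :: "'i \<Rightarrow> real"
  assumes "finite A" "\<And>i. i \<in> A \<Longrightarrow> 0 \<le> a i \<and> a i \<le> 1"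
  shows "1 - sum a A \<le> (\<Prod>i\<in>A. 1 - a i)"
  using assms
proof (induction A rule: finite_induct)
  case (insert x A)
  have a: "0 \<le> a x" "a x \<le> 1"
    using insert.prems by auto
  have "0 \<le> a x * sum a A"
    using a insert.prems by (intro mult_nonneg_nonneg sum_nonneg) auto
  then have "1 - a x - sum a A \<le> (1 - a x) * (1 - sum a A)"
    by (simp add: algebra_simps)
  also have "\<dots> \<le> (1 - a x) * (\<Prod>i\<in>A. 1 - a i)"
    using a insert.prems by (intro mult_left_mono insert.IH) auto
  finally show ?case
    using insert.hyps by simp
qed simp

lemma two_pow_phi_iter_slope:
  assumes "0 \<le> X"
  shows "2 ^ r * phi_iter_slope r X = (\<Prod>k<r. 1 - 1 / (1 + sqrt ((Psi ^^ k) X)))"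
proof -
  have "2 ^ r * phi_iter_slope r X = (\<Prod>k<r. 2 * phi_slope ((Psi ^^ k) X))"
    by (simp add: phi_iter_slope_def prod.distrib)
  also have "\<dots> = (\<Prod>k<r. 1 - 1 / (1 + sqrt ((Psi ^^ k) X)))"
    using assms by (intro prod.cong refl two_phi_slope Psi_iter_nonneg)
  finally show ?thesis .
qed

lemma phi_iter_slope_deficit_bounds:
  fixes m :: nat and X :: real
  assumes "1 \<le> X"
  defines "s \<equiv> sqrt ((Psi ^^ m) X)"
    and "E \<equiv> 1 - 2 ^ Suc m * phi_iter_slope (Suc m) X"
  shows "1 / (1 + s) \<le> E" and "s * E \<le> 1 + m / s"
proof -
  define e where "e k = 1 / (1 + sqrt ((Psi ^^ k) X))" for k
  define P where "P = (\<Prod>k<m. 1 - e k)"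
  have s: "1 \<le> s"
    unfolding s_def using Psi_iter_ge_1[OF assms(1)] by simp
  have e: "0 \<le> e k" "e k \<le> 1 / s\<^sup>2" if "k < m" for k
  proof -
    have "s\<^sup>2 \<le> 1 + sqrt ((Psi ^^ k) X)"
      using Psi_iter_le_sqrt_Psi_iter[OF assms(1) that] Psi_iter_ge_1[OF assms(1), of m] by (simp add: s_def)
    then show "e k \<le> 1 / s\<^sup>2"
      unfolding e_def using s Psi_iter_ge_1[OF assms(1), of k]
      by (intro divide_left_mono) (auto intro!: mult_pos_pos add_pos_nonneg)
    show "0 \<le> e k"
      unfolding e_def using Psi_iter_ge_1[OF assms(1), of k] by (simp add: add_nonneg_nonneg)
  qed
  have "1 / s\<^sup>2 \<le> 1"
    using s by (simp add: one_le_power)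
  then have e_le_1: "e k \<le> 1" if "k < m" for k
    using e[OF that] by linarith
  have P: "0 \<le> P" "P \<le> 1"
    unfolding P_def using e e_le_1 by (auto intro: prod_nonneg prod_le_1)
  have "1 - m / s\<^sup>2 \<le> 1 - (\<Sum>k<m. e k)"
    using sum_bounded_above[of "{..<m}" e "1 / s\<^sup>2"] e by simp
  also have "\<dots> \<le> P"
    unfolding P_def using e e_le_1 by (intro one_minus_sum_le_prod_one_minus) auto
  finally have P_lower: "1 - m / s\<^sup>2 \<le> P" .
  define q where "q = 1 / (1 + s)"
  have q: "0 \<le> q" "q \<le> 1" "s * q \<le> 1"
    using s unfolding q_def by (simp_all add: divide_le_eq)
  have "2 ^ Suc m * phi_iter_slope (Suc m) X = P * (1 - q)"
    using two_pow_phi_iter_slope[of X "Suc m"] assms(1) by (simp add: P_def e_def s_def q_def)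
  then have E: "E = (1 - P) + P * q"
    by (simp add: E_def algebra_simps)
  have "0 \<le> (1 - P) * (1 - q)"
    using P q by simp
  then have "q \<le> E"
    by (simp add: E algebra_simps)
  then show "1 / (1 + s) \<le> E"
    by (simp only: q_def)
  have "s * (1 - P) \<le> s * (m / s\<^sup>2)"
    using P_lower s by (intro mult_left_mono) auto
  also have "\<dots> = m / s"
    using s by (simp add: power2_eq_square)
  finally have "s * (1 - P) \<le> m / s" .
  moreover have "P * (s * q) \<le> 1"
    using P q s by (intro mult_le_one[of P "s * q"]) auto
  ultimately show "s * E \<le> 1 + m / s"
    unfolding E by (simp add: algebra_simps)
qed

lemma abs_ln_le_of_bounds:
  fixes s t c :: real
  assumes "1 \<le> s" "0 \<le> c" "1 / (1 + s) \<le> t" "s * t \<le> 1 + c / s"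
  shows "\<bar>ln (s * t)\<bar> \<le> (c + 1) / s"
proof -
  have pos: "0 < s / (1 + s)" "s / (1 + s) \<le> s * t"
    using assms(1,3) mult_left_mono[OF assms(3), of s] by auto
  have inv: "s / (1 + s) = inverse (1 + 1 / s)"
    using assms(1) by (simp add: field_simps)
  have "- (1 / s) \<le> - ln (1 + 1 / s)"
    using assms(1) by (simp add: ln_add_one_self_le_self)
  also have "\<dots> = ln (s / (1 + s))"
    unfolding inv using assms(1) by (simp add: ln_inverse add_pos_nonneg)
  also have "\<dots> \<le> ln (s * t)"
    using pos by simp
  finally have lower: "- (1 / s) \<le> ln (s * t)" .
  have "ln (s * t) \<le> ln (1 + c / s)"
    using pos assms(4) by simp
  also have "\<dots> \<le> c / s"
    using assms(1,2) by (intro ln_add_one_self_le_self) simp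
  finally have upper: "ln (s * t) \<le> c / s" .
  have "0 \<le> c / s" "0 \<le> 1 / s"
    using assms(1,2) by auto
  with lower upper show ?thesis
    unfolding abs_le_iff add_divide_distrib by linarith
qed

lemma tendsto_phi_iter_slope_at_top: "(phi_iter_slope (Suc m) \<longlongrightarrow> 1 / 2 ^ Suc m) at_top"
proof -
  define E where "E X = 1 - 2 ^ Suc m * phi_iter_slope (Suc m) X" for X
  have "((\<lambda>X. (real m + 1) / sqrt ((Psi ^^ m) X)) \<longlongrightarrow> 0) at_top"
    by (intro tendsto_divide_0[OF tendsto_const] filterlim_at_top_imp_at_infinity
        filterlim_compose[OF sqrt_at_top filterlim_Psi_iter_at_top])
  moreover have "\<forall>\<^sub>F X in at_top. 0 \<le> E X \<and> E X \<le> (real m + 1) / sqrt ((Psi ^^ m) X)"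
    using eventually_ge_at_top[of 1]
  proof (rule eventually_mono)
    fix X :: real
    assume X: "1 \<le> X"
    define s where "s = sqrt ((Psi ^^ m) X)"
    have s: "1 \<le> s"
      using Psi_iter_ge_1[OF X] by (simp add: s_def)
    have "1 / (1 + s) \<le> E X" "s * E X \<le> 1 + m / s"
      using phi_iter_slope_deficit_bounds[OF X] by (simp_all add: E_def s_def)
    moreover have "1 + m / s \<le> real m + 1"
      using s by (simp add: divide_le_eq mult_le_cancel_left1)
    ultimately show "0 \<le> E X \<and> E X \<le> (real m + 1) / s"
      using s by (auto simp: le_divide_eq mult.commute intro: order_trans[of 0 "1 / (1 + s)"])
  qed
  ultimately have "(E \<longlongrightarrow> 0) at_top"
    by (auto intro: tendsto_sandwich[where f = "\<lambda>_. 0"] elim: eventually_mono)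
  then have "((\<lambda>X. (1 - E X) / 2 ^ Suc m) \<longlongrightarrow> (1 - 0) / 2 ^ Suc m) at_top"
    by (intro tendsto_intros) auto
  then show ?thesis
    by (simp add: E_def)
qed

lemma ln_add_two_pow_ln_eq:
  fixes m :: nat
  assumes "0 < X" "0 < \<eta>"
  shows "ln X + 2 ^ Suc m * ln (2 powr (real (Suc m) - 1 + 2 powr (1 - real (Suc m))) * \<eta>)
    = 2 ^ Suc m * ln (sqrt ((Psi ^^ m) X) * (2 ^ Suc m * \<eta>))
      - (\<Sum>k<m. 2 ^ (k + 1) * ln (1 + 1 / sqrt ((Psi ^^ k) X)))"
proof -
  define p :: real where "p = 2 ^ m"
  define L where "L = ln ((Psi ^^ m) X)"
  define T where "T = (\<Sum>k<m. 2 ^ (k + 1) * ln (1 + 1 / sqrt ((Psi ^^ k) X)))"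
  have p: "0 < p"
    by (simp add: p_def)
  have ln_X: "ln X = p * L + (2 * p - 2) * ln 2 - T"
    using ln_Psi_iter[OF assms(1), of m] by (simp add: p_def T_def L_def)
  have ln_target: "ln (2 powr (real (Suc m) - 1 + 2 powr (1 - real (Suc m))) * \<eta>)
      = (real m + 1 / p) * ln 2 + ln \<eta>"
    using assms(2) by (simp add: ln_mult_pos p_def powr_minus powr_realpow divide_inverse)
  have ln_scaled: "ln (sqrt ((Psi ^^ m) X) * (2 ^ Suc m * \<eta>)) = L / 2 + (real m + 1) * ln 2 + ln \<eta>"
    using Psi_iter_pos[OF assms(1), of m] assms(2)
    by (simp add: L_def ln_mult_pos ln_sqrt ln_realpow distrib_right)
  \<comment> \<open>the exponent \<open>m + 2 powr -m\<close> is exactly what cancels the \<open>ln 2\<close> terms of \<open>ln_Psi_iter\<close>\<close>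
  have "ln X + 2 ^ Suc m * ln (2 powr (real (Suc m) - 1 + 2 powr (1 - real (Suc m))) * \<eta>)
      = (p * L + (2 * p - 2) * ln 2 - T) + 2 * p * ((real m + 1 / p) * ln 2 + ln \<eta>)"
    by (simp only: ln_X ln_target) (simp add: p_def)
  also have "\<dots> = 2 * p * (L / 2 + (real m + 1) * ln 2 + ln \<eta>) - T"
    using p by (simp add: field_simps)
  finally show ?thesis
    by (simp only: ln_scaled) (simp add: p_def T_def)
qed

lemma ln_approx_by_phi_iter_slope_at_top:
  fixes m :: nat and X :: real
  assumes "1 \<le> X"
  defines "\<eta> \<equiv> 1 / 2 ^ Suc m - phi_iter_slope (Suc m) X"
  shows "0 < \<eta>"
    and "\<bar>ln X + 2 ^ Suc m * ln (2 powr (real (Suc m) - 1 + 2 powr (1 - real (Suc m))) * \<eta>)\<bar>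
           \<le> 3 * real (Suc m) * 4 ^ Suc m * \<eta>"
proof -
  define s where "s = sqrt ((Psi ^^ m) X)"
  define E where "E = 2 ^ Suc m * \<eta>"
  define p :: real where "p = 2 ^ m"
  define T where "T = (\<Sum>k<m. 2 ^ (k + 1) * ln (1 + 1 / sqrt ((Psi ^^ k) X)))"
  have s: "1 \<le> s"
    using Psi_iter_ge_1[OF assms(1)] by (simp add: s_def)
  have p: "0 < p"
    by (simp add: p_def)
  have E_bounds: "1 / (1 + s) \<le> E" "s * E \<le> 1 + m / s"
    using phi_iter_slope_deficit_bounds[OF assms(1), of m]
    by (simp_all add: E_def \<eta>_def s_def right_diff_distrib)
  moreover have "0 < 1 / (1 + s)"
    using s by simp
  ultimately have "0 < E"
    by linarith
  then show "0 < \<eta>"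
    by (simp add: E_def zero_less_mult_iff)
  have "1 / s \<le> 2 / (1 + s)"
    using s by (simp add: field_simps)
  also have "\<dots> \<le> 2 * E"
    using E_bounds(1) by simp
  finally have inv_s: "1 / s \<le> 4 * p * \<eta>"
    by (simp add: E_def p_def)
  have ln_sE: "\<bar>ln (s * E)\<bar> \<le> (real m + 1) / s"
    using abs_ln_le_of_bounds[OF s _ E_bounds] by simp
  have "T \<le> real m * p / s\<^sup>2"
    using ln_Psi_iter_remainder_bounds(2)[OF assms(1), of m] Psi_iter_ge_1[OF assms(1), of m]
    by (simp add: T_def p_def s_def)
  also have "\<dots> \<le> real m * p / s"
    using s p by (intro divide_left_mono) (auto simp: power2_eq_square)
  finally have T: "0 \<le> T" "T \<le> real m * p / s"
    using ln_Psi_iter_remainder_bounds(1)[OF assms(1), of m] by (simp_all add: T_def)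
  have "ln X + 2 ^ Suc m * ln (2 powr (real (Suc m) - 1 + 2 powr (1 - real (Suc m))) * \<eta>)
      = 2 * p * ln (s * E) - T"
    using ln_add_two_pow_ln_eq[of X \<eta> m] assms(1) \<open>0 < \<eta>\<close> by (simp add: s_def E_def p_def T_def)
  also have "\<bar>\<dots>\<bar> \<le> \<bar>2 * p * ln (s * E)\<bar> + T"
    using abs_triangle_ineq4[of "2 * p * ln (s * E)" T] T by simp
  also have "\<dots> \<le> 2 * p * ((real m + 1) / s) + real m * p / s"
    using mult_left_mono[OF ln_sE, of "2 * p"] T p by (simp add: abs_mult)
  also have "\<dots> \<le> 3 * real (Suc m) * p * (1 / s)"
    using s p by (simp add: field_simps)
  also have "\<dots> \<le> 3 * real (Suc m) * p * (4 * p * \<eta>)"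
    using inv_s p by (intro mult_left_mono) auto
  also have "\<dots> = 3 * real (Suc m) * 4 ^ Suc m * \<eta>"
    by (simp add: p_def power_mult_distrib[symmetric])
  finally show "\<bar>ln X + 2 ^ Suc m * ln (2 powr (real (Suc m) - 1 + 2 powr (1 - real (Suc m))) * \<eta>)\<bar>
           \<le> 3 * real (Suc m) * 4 ^ Suc m * \<eta>" .
qed

lemma xi_star_asymptotics_at_top:
  assumes "1 \<le> r"
  shows "(\<lambda>\<eta>. xi_star r (1 / 2 ^ r - \<eta>) - (- (2 ^ r) * ln (2 powr (real r - 1 + 2 powr (1 - real r)) * \<eta>)))
           \<in> O[at_right 0](\<lambda>\<eta>. \<eta>)"
proof (rule bigoI)
  obtain m where r: "r = Suc m"
    using assms by (cases r) auto
  have gap: "0 < 1 / 2 ^ r - phi_iter_slope r 1"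
    using ln_approx_by_phi_iter_slope_at_top(1)[of 1 m] by (simp add: r)
  show "\<forall>\<^sub>F \<eta> in at_right 0.
      norm (xi_star r (1 / 2 ^ r - \<eta>) - (- (2 ^ r) * ln (2 powr (real r - 1 + 2 powr (1 - real r)) * \<eta>)))
        \<le> (3 * real r * 4 ^ r) * norm \<eta>"
    using eventually_at_right_real[OF gap]
  proof (rule eventually_mono)
    fix \<eta> :: real
    assume "\<eta> \<in> {0<..<1 / 2 ^ r - phi_iter_slope r 1}"
    then have \<eta>: "0 < \<eta>" "phi_iter_slope r 1 \<le> 1 / 2 ^ r - \<eta>"
      by auto
    have "\<forall>\<^sub>F X in at_top. 1 \<le> X \<and> 1 / 2 ^ r - \<eta> < phi_iter_slope r X"
      using \<eta>(1) unfolding r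
      by (intro eventually_conj eventually_ge_at_top order_tendstoD(1)[OF tendsto_phi_iter_slope_at_top]) simp
    then obtain M where M: "1 \<le> M" "1 / 2 ^ r - \<eta> \<le> phi_iter_slope r M"
      unfolding eventually_at_top_linorder by (meson less_imp_le order_refl)
    moreover have "continuous_on {1..M} (phi_iter_slope r)"
      by (rule continuous_on_subset[OF continuous_on_phi_iter_slope]) auto
    ultimately obtain X where X: "1 \<le> X" "phi_iter_slope r X = 1 / 2 ^ r - \<eta>"
      using IVT'[of "phi_iter_slope r" 1 "1 / 2 ^ r - \<eta>" M] \<eta>(2) by auto
    then have "xi_star r (1 / 2 ^ r - \<eta>) = ln X"
      using xi_star_phi_iter_slope[OF assms, of X] by simp
    with X \<eta>(1) show "norm (xi_star r (1 / 2 ^ r - \<eta>)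
        - (- (2 ^ r) * ln (2 powr (real r - 1 + 2 powr (1 - real r)) * \<eta>)))
        \<le> (3 * real r * 4 ^ r) * norm \<eta>"
      using ln_approx_by_phi_iter_slope_at_top(2)[OF X(1), of m] by (simp add: r)
  qed
qed

theorem theorem4p4:
  fixes r :: nat
  assumes "r \<ge> 1"
  shows "(\<lambda>\<eta>. xi_star r \<eta>
            - 2 * ln (4 ^ r * \<eta> * sqrt ((Psi ^^ r) 0 * (\<Prod>k\<in>{1..r}. (Psi ^^ k) 0))))
           \<in> O[at_right (0::real)](\<lambda>\<eta>. \<eta>)
       \<and> (\<lambda>\<eta>. xi_star r (1 / 2 ^ r - \<eta>)
            - (- (2 ^ r) * ln (2 powr (real r - 1 + 2 powr (1 - real r)) * \<eta>)))
           \<in> O[at_right (0::real)](\<lambda>\<eta>. \<eta>)"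
  using xi_star_asymptotics_at_0[OF assms, unfolded Psi_weight_def] xi_star_asymptotics_at_top[OF assms]
  by blast

end
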